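(* Let $(M,g)$ be an $n$-dimensional Riemannian manifold, let $V$ be a torqued vector field, i.e. $\nabla_X V=aX+\psi(X)V$ for all $X\in\chi(M)$ with $a$ a smooth function, $\psi$ a $1$-form and $\psi(V)=0$ ($\nabla$ the Levi-Civita connection), and let $\eta$ be the $g$-dual $1$-form of $V$. Suppose $M$ is a mixed generalized quasi-Einstein manifold whose Ricci tensor is of the form $\mathrm{Ric}=\alpha g+\beta\,\eta\otimes\eta+\gamma(\eta\otimes\psi+\psi\otimes\eta)$ for smooth functions $\alpha,\beta,\gamma$. If $(V,\lambda,\mu)$ is an almost $\eta$-Yamabe soliton on $(M,g)$, then $$\lambda=\Big(\beta+\frac{\mu}{n}\Big)|V|^2+\alpha n-a.$$
   Context: An almost $\eta$-Yamabe soliton $(V,\lambda,\mu)$ on $(M,g)$, for a given $1$-form $\eta$, consists of a vector field $V$ and smooth functions $\lambda,\mu$ on $M$ with $\frac12\pounds_V g=(\mathrm{scal}-\lambda)g+\mu\,\eta\otimes\eta$, where $\mathrm{scal}$ is the scalar curvature. A non-flat Riemannian manifold of dimension $\ge3$ with non-identically-zero Ricci tensor is mixed generalized quasi-Einstein if $\mathrm{Ric}=\alpha g+\beta A\otimes A+\gamma B\otimes B+\delta(A\otimes B+B\otimes A)$ for smooth functions $\alpha,\beta,\gamma,\delta$ and $1$-forms $A,B$ with $g$-orthogonal $g$-dual vector fields. *)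

theory Defs
  imports "HOL-Analysis.Analysis"
begin

text \<open>Local-coordinate Riemannian geometry on an open set U of R^n
  (points are real^'n, coordinate indices range over the finite type 'n).\<close>

definition pd :: "'n::finite \<Rightarrow> (real^'n \<Rightarrow> real) \<Rightarrow> real^'n \<Rightarrow> real" where
  "pd i f x = deriv (\<lambda>t. f (x + t *\<^sub>R axis i 1)) 0"

fun Ck_on :: "nat \<Rightarrow> (real^'n::finite) set \<Rightarrow> (real^'n \<Rightarrow> real) \<Rightarrow> bool" where
  "Ck_on 0 U f = continuous_on U f"
| "Ck_on (Suc k) U f = (f differentiable_on U \<and> (\<forall>i. Ck_on k U (pd i f)))"

definition smooth_fun :: "(real^'n::finite) set \<Rightarrow> (real^'n \<Rightarrow> real) \<Rightarrow> bool" where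
  "smooth_fun U f \<longleftrightarrow> (\<forall>k. Ck_on k U f)"

definition smooth_field :: "(real^'n::finite) set \<Rightarrow> (real^'n \<Rightarrow> real^'n) \<Rightarrow> bool" where
  "smooth_field U V \<longleftrightarrow> (\<forall>k. smooth_fun U (\<lambda>x. V x $ k))"

definition riemannian_metric :: "(real^'n::finite) set \<Rightarrow> (real^'n \<Rightarrow> real^'n^'n) \<Rightarrow> bool" where
  "riemannian_metric U g \<longleftrightarrow>
     (\<forall>i j. smooth_fun U (\<lambda>x. g x $ i $ j)) \<and>
     (\<forall>x\<in>U. transpose (g x) = g x \<and> (\<forall>v. v \<noteq> 0 \<longrightarrow> v \<bullet> (g x *v v) > 0))"

definition ginv :: "(real^'n::finite \<Rightarrow> real^'n^'n) \<Rightarrow> real^'n \<Rightarrow> real^'n^'n" where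
  "ginv g x = matrix_inv (g x)"

definition christoffel :: "(real^'n::finite \<Rightarrow> real^'n^'n) \<Rightarrow> 'n \<Rightarrow> 'n \<Rightarrow> 'n \<Rightarrow> real^'n \<Rightarrow> real" where
  "christoffel g k i j x = (1/2) * (\<Sum>l\<in>UNIV. ginv g x $ k $ l *
      (pd i (\<lambda>y. g y $ j $ l) x + pd j (\<lambda>y. g y $ i $ l) x - pd l (\<lambda>y. g y $ i $ j) x))"

definition levi_civita :: "(real^'n::finite \<Rightarrow> real^'n^'n) \<Rightarrow> (real^'n \<Rightarrow> real^'n) \<Rightarrow> real^'n \<Rightarrow> real^'n \<Rightarrow> real^'n" where
  "levi_civita g V x v = (\<chi> k. \<Sum>i\<in>UNIV. v $ i *
      (pd i (\<lambda>y. V y $ k) x + (\<Sum>j\<in>UNIV. christoffel g k i j x * V x $ j)))"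

text \<open>Riemann tensor R^l_{ijk}: R(d_i,d_j)d_k = sum_l R^l_{ijk} d_l,
  R(X,Y) = nabla_X nabla_Y - nabla_Y nabla_X - nabla_[X,Y].\<close>
definition riemann :: "(real^'n::finite \<Rightarrow> real^'n^'n) \<Rightarrow> 'n \<Rightarrow> 'n \<Rightarrow> 'n \<Rightarrow> 'n \<Rightarrow> real^'n \<Rightarrow> real" where
  "riemann g l i j k x =
     pd i (christoffel g l j k) x - pd j (christoffel g l i k) x
     + (\<Sum>m\<in>UNIV. christoffel g l i m x * christoffel g m j k x
                 - christoffel g l j m x * christoffel g m i k x)"

definition ricci :: "(real^'n::finite \<Rightarrow> real^'n^'n) \<Rightarrow> 'n \<Rightarrow> 'n \<Rightarrow> real^'n \<Rightarrow> real" where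
  "ricci g j k x = (\<Sum>i\<in>UNIV. riemann g i i j k x)"

definition scal :: "(real^'n::finite \<Rightarrow> real^'n^'n) \<Rightarrow> real^'n \<Rightarrow> real" where
  "scal g x = (\<Sum>j\<in>UNIV. \<Sum>k\<in>UNIV. ginv g x $ j $ k * ricci g j k x)"

definition flat :: "(real^'n::finite \<Rightarrow> real^'n^'n) \<Rightarrow> (real^'n \<Rightarrow> real^'n) \<Rightarrow> real^'n \<Rightarrow> real^'n" where
  "flat g V x = g x *v V x"

definition sharp :: "(real^'n::finite \<Rightarrow> real^'n^'n) \<Rightarrow> (real^'n \<Rightarrow> real^'n) \<Rightarrow> real^'n \<Rightarrow> real^'n" where
  "sharp g A x = ginv g x *v A x"

definition lie_metric :: "(real^'n::finite \<Rightarrow> real^'n^'n) \<Rightarrow> (real^'n \<Rightarrow> real^'n) \<Rightarrow> real^'n \<Rightarrow> real^'n^'n" where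
  "lie_metric g V x = (\<chi> i j. \<Sum>k\<in>UNIV.
      V x $ k * pd k (\<lambda>y. g y $ i $ j) x
      + g x $ k $ j * pd i (\<lambda>y. V y $ k) x
      + g x $ i $ k * pd j (\<lambda>y. V y $ k) x)"

definition torqued :: "(real^'n::finite) set \<Rightarrow> (real^'n \<Rightarrow> real^'n^'n) \<Rightarrow> (real^'n \<Rightarrow> real^'n)
    \<Rightarrow> (real^'n \<Rightarrow> real) \<Rightarrow> (real^'n \<Rightarrow> real^'n) \<Rightarrow> bool" where
  "torqued U g V a \<psi> \<longleftrightarrow> smooth_field U V \<and> smooth_fun U a \<and> smooth_field U \<psi> \<and>
     (\<forall>x\<in>U. \<forall>v. levi_civita g V x v = a x *\<^sub>R v + (\<psi> x \<bullet> v) *\<^sub>R V x) \<and>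
     (\<forall>x\<in>U. \<psi> x \<bullet> V x = 0)"

definition mixed_gen_quasi_einstein :: "(real^'n::finite) set \<Rightarrow> (real^'n \<Rightarrow> real^'n^'n) \<Rightarrow> bool" where
  "mixed_gen_quasi_einstein U g \<longleftrightarrow>
     CARD('n) \<ge> 3 \<and>
     (\<exists>x\<in>U. \<exists>l i j k. riemann g l i j k x \<noteq> 0) \<and>
     (\<exists>x\<in>U. \<exists>i j. ricci g i j x \<noteq> 0) \<and>
     (\<exists>\<alpha> \<beta> \<gamma> \<delta> A B. smooth_fun U \<alpha> \<and> smooth_fun U \<beta> \<and> smooth_fun U \<gamma> \<and> smooth_fun U \<delta> \<and>
        smooth_field U A \<and> smooth_field U B \<and>
        (\<forall>x\<in>U. sharp g A x \<bullet> (g x *v sharp g B x) = 0) \<and>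
        (\<forall>x\<in>U. \<forall>i j. ricci g i j x = \<alpha> x * g x $ i $ j + \<beta> x * (A x $ i * A x $ j)
            + \<gamma> x * (B x $ i * B x $ j) + \<delta> x * (A x $ i * B x $ j + B x $ i * A x $ j)))"

definition almost_eta_yamabe :: "(real^'n::finite) set \<Rightarrow> (real^'n \<Rightarrow> real^'n^'n) \<Rightarrow> (real^'n \<Rightarrow> real^'n)
    \<Rightarrow> (real^'n \<Rightarrow> real^'n) \<Rightarrow> (real^'n \<Rightarrow> real) \<Rightarrow> (real^'n \<Rightarrow> real) \<Rightarrow> bool" where
  "almost_eta_yamabe U g \<eta> V lam \<mu> \<longleftrightarrow> smooth_field U V \<and> smooth_fun U lam \<and> smooth_fun U \<mu> \<and>
     (\<forall>x\<in>U. \<forall>i j. (1/2) * lie_metric g V x $ i $ j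
         = (scal g x - lam x) * g x $ i $ j + \<mu> x * (\<eta> x $ i * \<eta> x $ j))"

end

theory Submission
  imports Defs
begin

(* Everything happens at a single point and is contracted with the inverse metric.
   By the coordinate identity (L_V g)(X,Y) = g(nabla_X V, Y) + g(X, nabla_Y V), a torqued field
   has L_V g = 2a g + psi (x) eta + eta (x) psi, whose trace is 2na since psi(V) = 0. The same
   orthogonality makes the trace of the given Ricci form scal = n alpha + beta |V|^2, and the
   traced soliton equation n (scal - lambda) + mu |V|^2 = n a is then solved for lambda. *)

lemma matrix_inv_invertible:
  fixes A :: "'a::semiring_1^'n^'m"
  assumes "invertible A"
  shows "A ** matrix_inv A = mat 1" and "matrix_inv A ** A = mat 1"
  using someI_ex[OF assms[unfolded invertible_def]] by (simp_all add: matrix_inv_def)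

lemma invertible_if_posdef:
  fixes G :: "real^'n::finite^'n"
  assumes "\<forall>v. v \<noteq> 0 \<longrightarrow> v \<bullet> (G *v v) > 0"
  shows "invertible G"
proof -
  have "\<forall>v. G *v v = 0 \<longrightarrow> v = 0"
    using assms by (metis inner_zero_right less_irrefl)
  then show ?thesis
    using invertible_left_inverse matrix_left_invertible_ker by blast
qed

lemma pd_cong_open:
  assumes "open U" "x \<in> U" "\<forall>y\<in>U. f y = h y"
  shows "pd i f x = pd i h x"
  unfolding pd_def
proof (rule deriv_cong_ev)
  have "((\<lambda>t. x + t *\<^sub>R axis i 1) \<longlongrightarrow> x + 0 *\<^sub>R axis i 1) (nhds 0)"
    by (intro tendsto_intros) (auto simp: tendsto_def eventually_nhds)
  then have "\<forall>\<^sub>F t in nhds (0::real). x + t *\<^sub>R axis i 1 \<in> U"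
    using assms(1,2) topological_tendstoD by fastforce
  then show "\<forall>\<^sub>F t in nhds 0. f (x + t *\<^sub>R axis i 1) = h (x + t *\<^sub>R axis i 1)"
    by (rule eventually_mono) (use assms(3) in auto)
qed simp

definition metric_contraction :: "real^'n::finite^'n \<Rightarrow> ('n \<Rightarrow> 'n \<Rightarrow> real) \<Rightarrow> real" where
  "metric_contraction H B = (\<Sum>i\<in>UNIV. \<Sum>j\<in>UNIV. H $ i $ j * B i j)"

lemma metric_contraction_add:
  "metric_contraction H (\<lambda>i j. B i j + C i j) = metric_contraction H B + metric_contraction H C"
  by (simp add: metric_contraction_def distrib_left sum.distrib)

lemma metric_contraction_scale:
  "metric_contraction H (\<lambda>i j. c * B i j) = c * metric_contraction H B"
  by (simp add: metric_contraction_def sum_distrib_left mult_ac)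

lemma metric_contraction_tensor:
  "metric_contraction H (\<lambda>i j. u $ i * w $ j) = u \<bullet> (H *v w)"
  by (simp add: metric_contraction_def inner_vec_def matrix_vector_mult_def sum_distrib_left mult_ac)

lemma metric_contraction_inverse:
  fixes G H :: "real^'n::finite^'n"
  assumes "H ** G = mat 1" "transpose G = G"
  shows "metric_contraction H (\<lambda>i j. G $ i $ j) = real CARD('n)"
proof -
  have "(H ** G) $ i $ i = (\<Sum>j\<in>UNIV. H $ i $ j * transpose G $ i $ j)" for i
    by (simp add: matrix_matrix_mult_def transpose_def)
  then have "(\<Sum>j\<in>UNIV. H $ i $ j * G $ i $ j) = 1" for i
    by (simp add: assms mat_def)
  then show ?thesis
    by (simp add: metric_contraction_def)
qed

lemma metric_contraction_lowered_left:
  fixes G H :: "real^'n::finite^'n"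
  assumes "G ** H = mat 1" "transpose G = G"
  shows "metric_contraction H (\<lambda>i j. (G *v u) $ i * w $ j) = u \<bullet> w"
proof -
  have "G *v u = u v* G"
    by (metis assms(2) vector_transpose_matrix)
  then show ?thesis
    by (simp add: metric_contraction_tensor dot_lmul_matrix matrix_vector_mul_assoc assms(1))
qed

lemma metric_contraction_lowered_right:
  fixes G H :: "real^'n::finite^'n"
  assumes "H ** G = mat 1"
  shows "metric_contraction H (\<lambda>i j. w $ i * (G *v u) $ j) = w \<bullet> u"
  by (simp add: metric_contraction_tensor matrix_vector_mul_assoc assms)

lemma scal_metric_contraction: "scal g x = metric_contraction (ginv g x) (\<lambda>i j. ricci g i j x)"
  by (simp add: scal_def metric_contraction_def)

lemma levi_civita_axis:
  "levi_civita g V x (axis i 1) $ k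
    = pd i (\<lambda>y. V y $ k) x + (\<Sum>m\<in>UNIV. christoffel g k i m x * V x $ m)"
  by (simp add: levi_civita_def axis_def if_distrib[of "\<lambda>u. u * _"] cong: if_cong)

context
  fixes U :: "(real^'n::finite) set" and g :: "real^'n \<Rightarrow> real^'n^'n"
  assumes metric: "riemannian_metric U g"
begin

lemma metric_transpose: "y \<in> U \<Longrightarrow> transpose (g y) = g y"
  using metric unfolding riemannian_metric_def by blast

lemma metric_symmetric: "y \<in> U \<Longrightarrow> g y $ i $ j = g y $ j $ i"
  by (subst metric_transpose[symmetric]) (simp_all add: transpose_def)

lemma metric_ginv:
  assumes "x \<in> U"
  shows "g x ** ginv g x = mat 1" and "ginv g x ** g x = mat 1"
proof -
  have "invertible (g x)"
    using metric assms unfolding riemannian_metric_def by (simp add: invertible_if_posdef)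
  then show "g x ** ginv g x = mat 1" and "ginv g x ** g x = mat 1"
    unfolding ginv_def by (rule matrix_inv_invertible)+
qed

lemma christoffel_lowered:
  assumes "x \<in> U"
  shows "(\<Sum>k\<in>UNIV. g x $ j $ k * christoffel g k i m x)
    = (pd i (\<lambda>y. g y $ m $ j) x + pd m (\<lambda>y. g y $ i $ j) x - pd j (\<lambda>y. g y $ i $ m) x) / 2"
proof -
  let ?C = "\<lambda>l. pd i (\<lambda>y. g y $ m $ l) x + pd m (\<lambda>y. g y $ i $ l) x - pd l (\<lambda>y. g y $ i $ m) x"
  have "(\<Sum>k\<in>UNIV. g x $ j $ k * christoffel g k i m x)
      = (\<Sum>k\<in>UNIV. \<Sum>l\<in>UNIV. g x $ j $ k * ginv g x $ k $ l * ?C l) / 2"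
    by (simp add: christoffel_def sum_distrib_left sum_divide_distrib mult_ac)
  also have "\<dots> = (\<Sum>l\<in>UNIV. (g x ** ginv g x) $ j $ l * ?C l) / 2"
    by (subst sum.swap) (simp add: matrix_matrix_mult_def sum_distrib_right)
  also have "\<dots> = ?C j / 2"
    by (simp add: metric_ginv(1)[OF assms] mat_def if_distrib[of "\<lambda>u. u * _"] cong: if_cong)
  finally show ?thesis .
qed

lemma levi_civita_axis_lowered:
  assumes "x \<in> U"
  shows "(g x *v levi_civita g V x (axis i 1)) $ j
    = (\<Sum>k\<in>UNIV. g x $ j $ k * pd i (\<lambda>y. V y $ k) x)
      + (\<Sum>m\<in>UNIV. V x $ m * ((pd i (\<lambda>y. g y $ m $ j) x + pd m (\<lambda>y. g y $ i $ j) x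
          - pd j (\<lambda>y. g y $ i $ m) x) / 2))"
proof -
  have "(g x *v levi_civita g V x (axis i 1)) $ j = (\<Sum>k\<in>UNIV. g x $ j $ k * pd i (\<lambda>y. V y $ k) x)
      + (\<Sum>k\<in>UNIV. \<Sum>m\<in>UNIV. V x $ m * (g x $ j $ k * christoffel g k i m x))"
    by (simp add: matrix_vector_mult_def levi_civita_axis distrib_left sum.distrib sum_distrib_left mult_ac)
  also have "\<dots> = (\<Sum>k\<in>UNIV. g x $ j $ k * pd i (\<lambda>y. V y $ k) x)
      + (\<Sum>m\<in>UNIV. V x $ m * (\<Sum>k\<in>UNIV. g x $ j $ k * christoffel g k i m x))"
    by (subst sum.swap) (simp add: sum_distrib_left)
  finally show ?thesis
    by (simp add: christoffel_lowered[OF assms])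
qed

lemma lie_metric_levi_civita:
  assumes "open U" "x \<in> U"
  shows "lie_metric g V x $ i $ j
    = (g x *v levi_civita g V x (axis i 1)) $ j + (g x *v levi_civita g V x (axis j 1)) $ i"
proof -
  let ?D = "\<lambda>m i j. pd m (\<lambda>y. g y $ i $ j) x"
  let ?P = "\<lambda>i k. pd i (\<lambda>y. V y $ k) x"
  have D_sym: "?D m i j = ?D m j i" for m i j
    by (rule pd_cong_open[OF assms]) (simp add: metric_symmetric)
  have "lie_metric g V x $ i $ j = (\<Sum>m\<in>UNIV. V x $ m * ?D m i j)
      + (\<Sum>k\<in>UNIV. g x $ k $ j * ?P i k) + (\<Sum>k\<in>UNIV. g x $ i $ k * ?P j k)"
    by (simp add: lie_metric_def sum.distrib)
  also have "(\<Sum>k\<in>UNIV. g x $ k $ j * ?P i k) = (\<Sum>k\<in>UNIV. g x $ j $ k * ?P i k)"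
    by (rule sum.cong) (simp_all add: metric_symmetric[OF assms(2), of _ j])
  finally have lie: "lie_metric g V x $ i $ j = (\<Sum>m\<in>UNIV. V x $ m * ?D m i j)
      + (\<Sum>k\<in>UNIV. g x $ j $ k * ?P i k) + (\<Sum>k\<in>UNIV. g x $ i $ k * ?P j k)" .
  have "(\<Sum>m\<in>UNIV. V x $ m * ((?D i m j + ?D m i j - ?D j i m) / 2))
      + (\<Sum>m\<in>UNIV. V x $ m * ((?D j m i + ?D m j i - ?D i j m) / 2)) = (\<Sum>m\<in>UNIV. V x $ m * ?D m i j)"
  proof -
    have "(?D i m j + ?D m i j - ?D j i m) / 2 + (?D j m i + ?D m j i - ?D i j m) / 2 = ?D m i j" for m
      by (simp only: D_sym[of i m j] D_sym[of j m i] D_sym[of m j i]) (simp add: field_simps)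
    then show ?thesis
      by (simp only: sum.distrib[symmetric] distrib_left[symmetric])
  qed
  then show ?thesis
    unfolding lie levi_civita_axis_lowered[OF assms(2)] by linarith
qed

lemma lie_metric_torqued_at:
  assumes "open U" "x \<in> U"
    and nabla_V: "\<forall>v. levi_civita g V x v = a *\<^sub>R v + (\<psi> \<bullet> v) *\<^sub>R V x"
  shows "lie_metric g V x $ i $ j
    = 2 * a * g x $ i $ j + \<psi> $ i * flat g V x $ j + flat g V x $ i * \<psi> $ j"
proof -
  have "(g x *v levi_civita g V x (axis i 1)) $ j = a * g x $ i $ j + \<psi> $ i * flat g V x $ j" for i j
    using nabla_V metric_symmetric[OF assms(2), of i j]
    by (simp add: flat_def inner_axis matrix_vector_right_distrib matrix_vector_mult_scaleR
        matrix_vector_mult_basis column_def)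
  then show ?thesis
    using metric_symmetric[OF assms(2), of i j] by (simp add: lie_metric_levi_civita[OF assms(1,2)])
qed

lemma scal_of_ricci_form:
  assumes "x \<in> U" "\<psi> \<bullet> V x = 0"
    and "\<forall>i j. ricci g i j x = \<alpha> * g x $ i $ j + \<beta> * (flat g V x $ i * flat g V x $ j)
           + \<gamma> * (flat g V x $ i * \<psi> $ j + \<psi> $ i * flat g V x $ j)"
  shows "scal g x = \<alpha> * real CARD('n) + \<beta> * (V x \<bullet> (g x *v V x))"
proof -
  have "scal g x = metric_contraction (ginv g x) (\<lambda>i j. \<alpha> * g x $ i $ j
      + \<beta> * (flat g V x $ i * flat g V x $ j) + \<gamma> * (flat g V x $ i * \<psi> $ j + \<psi> $ i * flat g V x $ j))"
    using assms(3) by (simp add: scal_metric_contraction)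
  then show ?thesis
    unfolding metric_contraction_add metric_contraction_scale flat_def
      metric_contraction_inverse[OF metric_ginv(2) metric_transpose, OF assms(1,1)]
      metric_contraction_lowered_left[OF metric_ginv(1) metric_transpose, OF assms(1,1)]
      metric_contraction_lowered_right[OF metric_ginv(2), OF assms(1)]
    by (simp add: assms(2) inner_commute)
qed

lemma trace_almost_eta_yamabe_torqued:
  assumes "open U" "x \<in> U" "torqued U g V a \<psi>" "almost_eta_yamabe U g (flat g V) V lam \<mu>"
  shows "(scal g x - lam x) * real CARD('n) + \<mu> x * (V x \<bullet> (g x *v V x)) = a x * real CARD('n)"
proof -
  have nabla_V: "\<forall>v. levi_civita g V x v = a x *\<^sub>R v + (\<psi> x \<bullet> v) *\<^sub>R V x"
    and \<psi>_V: "\<psi> x \<bullet> V x = 0"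
    using assms(2,3) unfolding torqued_def by auto
  have "metric_contraction (ginv g x)
      (\<lambda>i j. (scal g x - lam x) * g x $ i $ j + \<mu> x * (flat g V x $ i * flat g V x $ j))
    = metric_contraction (ginv g x) (\<lambda>i j. 1/2 * lie_metric g V x $ i $ j)"
    using assms(2,4) unfolding almost_eta_yamabe_def by (simp only: ball_simps)
  also have "\<dots> = 1/2 * metric_contraction (ginv g x)
      (\<lambda>i j. 2 * a x * g x $ i $ j + \<psi> x $ i * flat g V x $ j + flat g V x $ i * \<psi> x $ j)"
    by (simp only: metric_contraction_scale lie_metric_torqued_at[OF assms(1,2) nabla_V])
  finally show ?thesis
    unfolding metric_contraction_add metric_contraction_scale flat_def
      metric_contraction_inverse[OF metric_ginv(2) metric_transpose, OF assms(2,2)]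
      metric_contraction_lowered_left[OF metric_ginv(1) metric_transpose, OF assms(2,2)]
      metric_contraction_lowered_right[OF metric_ginv(2), OF assms(2)]
    using \<psi>_V by (simp add: inner_commute)
qed

end

theorem mainTheorem10:
  fixes U :: "(real^'n::finite) set"
    and g :: "real^'n \<Rightarrow> real^'n^'n"
    and V \<psi> :: "real^'n \<Rightarrow> real^'n"
    and a \<alpha> \<beta> \<gamma> lam \<mu> :: "real^'n \<Rightarrow> real"
  assumes "open U"
    and "riemannian_metric U g"
    and "torqued U g V a \<psi>"
    and "mixed_gen_quasi_einstein U g"
    and "smooth_fun U \<alpha>" and "smooth_fun U \<beta>" and "smooth_fun U \<gamma>"
    and "\<forall>x\<in>U. \<forall>i j. ricci g i j x = \<alpha> x * g x $ i $ j
           + \<beta> x * (flat g V x $ i * flat g V x $ j)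
           + \<gamma> x * (flat g V x $ i * \<psi> x $ j + \<psi> x $ i * flat g V x $ j)"
    and "almost_eta_yamabe U g (flat g V) V lam \<mu>"
  shows "\<forall>x\<in>U. lam x = (\<beta> x + \<mu> x / real CARD('n)) * (V x \<bullet> (g x *v V x))
                     + \<alpha> x * real CARD('n) - a x"
proof
  fix x assume x: "x \<in> U"
  have "\<psi> x \<bullet> V x = 0"
    using assms(3) x unfolding torqued_def by blast
  then have "scal g x = \<alpha> x * real CARD('n) + \<beta> x * (V x \<bullet> (g x *v V x))"
    using assms(8) x by (intro scal_of_ricci_form[OF assms(2)]) auto
  moreover have "(scal g x - lam x) * real CARD('n) + \<mu> x * (V x \<bullet> (g x *v V x))
      = a x * real CARD('n)"
    using trace_almost_eta_yamabe_torqued[OF assms(2,1) x assms(3,9)] .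
  ultimately show "lam x = (\<beta> x + \<mu> x / real CARD('n)) * (V x \<bullet> (g x *v V x))
      + \<alpha> x * real CARD('n) - a x"
    by (simp add: field_simps)
qed

end
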